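(* Let $H=(V,E)$ be a graph, $\ell\ge1$ an integer, and let $G$ be $\ell$-suspended over $H$. Then for any two vertices $x,y\in V$ and any $i\in\{0,\dots,\ell\}$ we have $d_G((x,0),(y,i))=d_G((x,\ell),(y,\ell-i))=d_H(x,y)+i$.
   Context: $d_G$ denotes graph distance (length of a shortest path) in $G$. $P_\ell$ is the path on $0,1,\dots,\ell$ and $H\times P_\ell$ is the Cartesian product (vertex set $V\times\{0,\dots,\ell\}$, with $(x,i)\sim(y,j)$ iff ($\{x,y\}\in E$ and $i=j$) or ($x=y$ and $|i-j|=1$)). A graph $G$ is $\ell$-suspended over $H$ if $G$ is a spanning subgraph of $H\times P_\ell$ that contains all edges $\{(x,i),(x,i+1)\}$ ($x\in V$, $0\le i<\ell$) and all edges $\{(x,0),(y,0)\}$ and $\{(x,\ell),(y,\ell)\}$ for $\{x,y\}\in E$. *)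

theory Defs
  imports Main "HOL-Library.Extended_Nat"
begin

definition graph :: "'a set \<Rightarrow> 'a set set \<Rightarrow> bool" where
  "graph V E \<longleftrightarrow> E \<subseteq> {{x, y} | x y. x \<in> V \<and> y \<in> V \<and> x \<noteq> y}"

fun walk :: "'a set \<Rightarrow> 'a set set \<Rightarrow> 'a list \<Rightarrow> bool" where
  "walk V E [] = False"
| "walk V E [x] = (x \<in> V)"
| "walk V E (x # y # xs) = (x \<in> V \<and> {x, y} \<in> E \<and> walk V E (y # xs))"

definition gdist :: "'a set \<Rightarrow> 'a set set \<Rightarrow> 'a \<Rightarrow> 'a \<Rightarrow> enat" where
  "gdist V E x y = (INF p \<in> {p. walk V E p \<and> hd p = x \<and> last p = y}. enat (length p - 1))"

definition prod_path_edges :: "'a set \<Rightarrow> 'a set set \<Rightarrow> nat \<Rightarrow> ('a \<times> nat) set set" where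
  "prod_path_edges V E l =
     {{(x, i), (y, i)} | x y i. {x, y} \<in> E \<and> i \<le> l}
   \<union> {{(x, i), (x, Suc i)} | x i. x \<in> V \<and> i < l}"

definition suspended :: "nat \<Rightarrow> 'a set \<Rightarrow> 'a set set \<Rightarrow> ('a \<times> nat) set set \<Rightarrow> bool" where
  "suspended l V E EG \<longleftrightarrow>
     EG \<subseteq> prod_path_edges V E l
   \<and> (\<forall>x\<in>V. \<forall>i<l. {(x, i), (x, Suc i)} \<in> EG)
   \<and> (\<forall>x y. {x, y} \<in> E \<longrightarrow> {(x, 0), (y, 0)} \<in> EG \<and> {(x, l), (y, l)} \<in> EG)"

end

theory Submission
  imports Defs
begin

text \<open>Projecting a walk of \<open>G\<close> to \<open>H\<close> deletes exactly its vertical steps, and there are at least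
  as many of them as the difference of the end levels; this gives
  \<open>d\<^sub>H(x, y) + |a - b| \<le> d\<^sub>G((x, a), (y, b))\<close>. Conversely, \<open>G\<close> contains copies of \<open>H\<close> on the levels
  \<open>0\<close> and \<open>l\<close> and all vertical paths, so walking in the bottom (top) copy from \<open>x\<close> to \<open>y\<close> and then
  vertically by \<open>i\<close> levels attains the bound.\<close>

lemma gdist_le_walk:
  "walk V E p \<Longrightarrow> hd p = x \<Longrightarrow> last p = y \<Longrightarrow> gdist V E x y \<le> enat (length p - 1)"
  unfolding gdist_def by (auto intro: INF_lower)

lemma gdist_greatest:
  "(\<And>p. walk V E p \<Longrightarrow> hd p = x \<Longrightarrow> last p = y \<Longrightarrow> c \<le> enat (length p - 1))
   \<Longrightarrow> c \<le> gdist V E x y"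
  unfolding gdist_def by (auto intro: INF_greatest)

lemma gdist_attained:
  assumes "gdist V E x y \<noteq> \<infinity>"
  obtains p where "walk V E p" "hd p = x" "last p = y" "gdist V E x y = enat (length p - 1)"
proof -
  let ?S = "(\<lambda>p. enat (length p - 1)) ` {p. walk V E p \<and> hd p = x \<and> last p = y}"
  have gdist_eq: "gdist V E x y = Inf ?S" unfolding gdist_def by simp
  have "?S \<noteq> {}" using assms gdist_eq by (auto simp: top_enat_def[symmetric])
  then have "Inf ?S \<in> ?S" unfolding Inf_enat_def by (auto intro: LeastI)
  then show ?thesis using gdist_eq that by auto
qed

lemma walk_not_Nil: "walk V E p \<Longrightarrow> p \<noteq> []"
  by (cases p) auto

lemma walk_hd_in: "walk V E p \<Longrightarrow> hd p \<in> V"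
  by (induction V E p rule: walk.induct) auto

lemma walk_append_tl:
  "walk V E p \<Longrightarrow> walk V E q \<Longrightarrow> last p = hd q \<Longrightarrow> walk V E (p @ tl q)"
proof (induction V E p rule: walk.induct)
  case (2 V E x)
  then show ?case by (cases q) auto
qed auto

lemma walk_rev: "walk V E p \<Longrightarrow> walk V E (rev p)"
proof (induction V E p rule: walk.induct)
  case (3 V E x y xs)
  have "walk V E (rev (y # xs) @ tl [y, x])"
    using 3 walk_hd_in[of V E "y # xs"] by (intro walk_append_tl) (auto simp: insert_commute)
  then show ?case by simp
qed auto

lemma walk_map:
  assumes "\<And>v. v \<in> V \<Longrightarrow> f v \<in> V'" and "\<And>u v. {u, v} \<in> E \<Longrightarrow> {f u, f v} \<in> E'"
  shows "walk V E p \<Longrightarrow> walk V' E' (map f p)"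
  by (induction p rule: induct_list012) (auto simp: assms)

lemma gdist_commute: "gdist V E x y = gdist V E y x"
proof -
  have "gdist V E y x \<le> gdist V E x y" for x y
  proof (rule gdist_greatest)
    fix p assume "walk V E p" "hd p = x" "last p = y"
    then show "gdist V E y x \<le> enat (length p - 1)"
      using gdist_le_walk[OF walk_rev] by (simp add: hd_rev last_rev)
  qed
  then show ?thesis by (metis antisym)
qed

lemma gdist_triangle: "gdist V E x z \<le> gdist V E x y + gdist V E y z"
proof (cases "gdist V E x y = \<infinity> \<or> gdist V E y z = \<infinity>")
  case False
  then obtain p q where p: "walk V E p" "hd p = x" "last p = y" "gdist V E x y = enat (length p - 1)"
    and q: "walk V E q" "hd q = y" "last q = z" "gdist V E y z = enat (length q - 1)"
    using gdist_attained by metis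
  obtain q' where "q = y # q'" using q(1,2) walk_not_Nil by (cases q) auto
  moreover obtain p' where "p = x # p'" using p(1,2) walk_not_Nil by (cases p) auto
  ultimately have "hd (p @ tl q) = x" "last (p @ tl q) = z"
    and "length (p @ tl q) - 1 = (length p - 1) + (length q - 1)"
    using p q by auto
  moreover have "walk V E (p @ tl q)" using p q by (intro walk_append_tl) auto
  ultimately show ?thesis using p q gdist_le_walk by (metis plus_enat_simps(1))
qed auto

lemma gdist_map_le:
  assumes "\<And>v. v \<in> V \<Longrightarrow> f v \<in> V'" and "\<And>u v. {u, v} \<in> E \<Longrightarrow> {f u, f v} \<in> E'"
  shows "gdist V' E' (f x) (f y) \<le> gdist V E x y"
proof (rule gdist_greatest)
  fix p assume p: "walk V E p" "hd p = x" "last p = y"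
  have "walk V' E' (map f p)" using walk_map[OF assms p(1)] .
  then show "gdist V' E' (f x) (f y) \<le> enat (length p - 1)"
    using gdist_le_walk[of V' E' "map f p"] p walk_not_Nil[OF p(1)] by (simp add: hd_map last_map)
qed

lemma gdist_edge_le_1: "u \<in> V \<Longrightarrow> v \<in> V \<Longrightarrow> {u, v} \<in> E \<Longrightarrow> gdist V E u v \<le> 1"
  using gdist_le_walk[of V E "[u, v]"] by (simp add: one_enat_def)

lemma gdist_level_le:
  assumes "suspended l V E EG" and "c = 0 \<or> c = l"
  shows "gdist (V \<times> {0..l}) EG (x, c) (y, c) \<le> gdist V E x y"
  using assms by (intro gdist_map_le[where f = "\<lambda>v. (v, c)"]) (auto simp: suspended_def)

lemma gdist_column_le:
  assumes "suspended l V E EG" and "y \<in> V" and "a + k \<le> l"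
  shows "gdist (V \<times> {0..l}) EG (y, a) (y, a + k) \<le> enat k"
  using assms(3)
proof (induction k)
  case 0
  show ?case using gdist_le_walk[of _ _ "[(y, a)]"] assms by (simp add: zero_enat_def)
next
  case (Suc k)
  have "gdist (V \<times> {0..l}) EG (y, a) (y, a + Suc k)
      \<le> gdist (V \<times> {0..l}) EG (y, a) (y, a + k) + gdist (V \<times> {0..l}) EG (y, a + k) (y, a + Suc k)"
    by (rule gdist_triangle)
  also have "\<dots> \<le> enat k + 1"
    using Suc assms(1,2) by (intro add_mono gdist_edge_le_1) (auto simp: suspended_def)
  finally show ?case by (simp add: eSuc_enat[symmetric] eSuc_plus_1)
qed

lemma walk_project:
  "walk (V \<times> {0..l}) EG p \<Longrightarrow> EG \<subseteq> prod_path_edges V E l \<Longrightarrow>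
   \<exists>q. walk V E q \<and> hd q = fst (hd p) \<and> last q = fst (last p) \<and>
       length q - 1 + nat \<bar>int (snd (hd p)) - int (snd (last p))\<bar> \<le> length p - 1"
proof (induction "V \<times> {0..l}" EG p rule: walk.induct)
  case (2 E x)
  then show ?case by (intro exI[of _ "[fst x]"]) auto
next
  case (3 EG a b xs)
  then obtain q where q: "walk V E q" "hd q = fst b" "last q = fst (last (b # xs))"
    "length q - 1 + nat \<bar>int (snd b) - int (snd (last (b # xs)))\<bar> \<le> length (b # xs) - 1"
    by auto
  have "q \<noteq> []" using q(1) walk_not_Nil by blast
  have ab: "{a, b} \<in> prod_path_edges V E l" and "fst a \<in> V" using 3 by auto
  show ?case
  proof (cases "snd a = snd b")
    case True
    then have "{fst a, fst b} \<in> E"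
      using ab by (auto simp: prod_path_edges_def doubleton_eq_iff insert_commute)
    then have "walk V E (fst a # q)" using q \<open>q \<noteq> []\<close> \<open>fst a \<in> V\<close> by (cases q) auto
    then show ?thesis using q \<open>q \<noteq> []\<close> True by (intro exI[of _ "fst a # q"]) auto
  next
    case False
    then have "fst a = fst b \<and> (snd b = Suc (snd a) \<or> snd a = Suc (snd b))"
      using ab by (auto simp: prod_path_edges_def doubleton_eq_iff)
    then show ?thesis using q by (intro exI[of _ q]) auto
  qed
qed auto

lemma gdist_project_ge:
  assumes "EG \<subseteq> prod_path_edges V E l"
  shows "gdist V E x y + enat (nat \<bar>int a - int b\<bar>) \<le> gdist (V \<times> {0..l}) EG (x, a) (y, b)"
proof (rule gdist_greatest)
  fix p assume p: "walk (V \<times> {0..l}) EG p" "hd p = (x, a)" "last p = (y, b)"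
  then obtain q where q: "walk V E q" "hd q = x" "last q = y"
    "length q - 1 + nat \<bar>int a - int b\<bar> \<le> length p - 1"
    using walk_project[OF p(1) assms] by auto
  have "gdist V E x y + enat (nat \<bar>int a - int b\<bar>) \<le> enat (length q - 1) + enat (nat \<bar>int a - int b\<bar>)"
    using gdist_le_walk[OF q(1-3)] by (rule add_right_mono)
  also have "\<dots> \<le> enat (length p - 1)" using q(4) by simp
  finally show "gdist V E x y + enat (nat \<bar>int a - int b\<bar>) \<le> enat (length p - 1)" .
qed

theorem lemma3p2:
  fixes V :: "'a set" and E :: "'a set set" and EG :: "('a \<times> nat) set set" and l :: nat
  assumes "graph V E" and "l \<ge> 1" and "suspended l V E EG"
    and "x \<in> V" and "y \<in> V" and "i \<le> l"
  shows "gdist (V \<times> {0..l}) EG (x, 0) (y, i) = gdist V E x y + enat i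
       \<and> gdist (V \<times> {0..l}) EG (x, l) (y, l - i) = gdist V E x y + enat i"
proof
  let ?dG = "gdist (V \<times> {0..l}) EG" and ?dH = "gdist V E x y"
  have EG_sub: "EG \<subseteq> prod_path_edges V E l" using assms(3) by (simp add: suspended_def)
  have "?dG (x, 0) (y, i) \<le> ?dG (x, 0) (y, 0) + ?dG (y, 0) (y, 0 + i)"
    by (simp add: gdist_triangle)
  also have "\<dots> \<le> ?dH + enat i"
    using assms by (intro add_mono gdist_level_le gdist_column_le) auto
  finally show "?dG (x, 0) (y, i) = ?dH + enat i"
    using gdist_project_ge[OF EG_sub, of x y 0 i] by simp
  have "?dG (x, l) (y, l - i) \<le> ?dG (x, l) (y, l) + ?dG (y, l) (y, l - i)"
    by (rule gdist_triangle)
  also have "\<dots> = ?dG (x, l) (y, l) + ?dG (y, l - i) (y, l - i + i)"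
    using assms(6) by (simp add: gdist_commute[of _ _ "(y, l)"])
  also have "\<dots> \<le> ?dH + enat i"
    using assms by (intro add_mono gdist_level_le gdist_column_le) auto
  finally show "?dG (x, l) (y, l - i) = ?dH + enat i"
    using gdist_project_ge[OF EG_sub, of x y l "l - i"] assms(6) by (simp add: of_nat_diff)
qed

end
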